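(* Let $X=\mathbb{R}^{\mathcal N}$ with the Euclidean inner product $\langle u,v\rangle=u^t v$. Let $\mathcal P\subset\mathbb{R}^p$ and let $\mu$ be a random variable with values in $\mathcal P$. For each $\mu\in\mathcal P$ let $A(\mu)$ be an invertible $\mathcal N\times\mathcal N$ matrix and $f(\mu)\in X$, let $l\in X$, and let $Z$ be an $\mathcal N\times n$ matrix such that $Z^tA(\mu)Z$ is invertible for every $\mu$. Let $u(\mu)$ solve $A(\mu)u(\mu)=f(\mu)$, let $\widetilde u(\mu)$ solve $Z^tA(\mu)Z\,\widetilde u(\mu)=Z^tf(\mu)$, and set $s(\mu)=\langle l,u(\mu)\rangle$, $\widetilde s(\mu)=\langle l,Z\widetilde u(\mu)\rangle$, $r(\mu)=A(\mu)Z\widetilde u(\mu)-f(\mu)$, $w(\mu)=A(\mu)^{-t}l$. Let $\Phi=\{\phi_1,\dots,\phi_{\mathcal N}\}$ be any orthonormal basis of $X$ (with the convention $\phi_i=0$ for $i>\mathcal N$), and let $\{\mathcal P_1,\dots,\mathcal P_K\}$ be a partition of $\mathcal P$; for $\mu\in\mathcal P$ let $k(\mu)$ be the unique $k$ with $\mu\in\mathcal P_k$. Let $N\in\mathbb{N}^*$. For $i=1,\dots,N$ put $D_i(\mu,\Phi)=\langle w(\mu),\phi_i\rangle$, and for $k=1,\dots,K$ put $\beta^{min}_{i,k}(\Phi)=\min_{\mu\in\mathcal P_k}D_i(\mu,\Phi)$ and $\beta^{max}_{i,k}(\Phi)=\max_{\mu\in\mathcal P_k}D_i(\mu,\Phi)$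 (assumed to exist). Define $\beta_i^{up}(\mu,\Phi)=\beta^{max}_{i,k(\mu)}(\Phi)$ if $\langle r(\mu),\phi_i\rangle>0$ and $\beta^{min}_{i,k(\mu)}(\Phi)$ otherwise; and $\beta_i^{low}(\mu,\Phi)=\beta^{min}_{i,k(\mu)}(\Phi)$ if $\langle r(\mu),\phi_i\rangle>0$ and $\beta^{max}_{i,k(\mu)}(\Phi)$ otherwise. Set $T_1^{low}(\mu,N,\Phi)=\sum_{i=1}^N\langle r(\mu),\phi_i\rangle\beta_i^{low}(\mu,\Phi)$, $T_1^{up}(\mu,N,\Phi)=\sum_{i=1}^N\langle r(\mu),\phi_i\rangle\beta_i^{up}(\mu,\Phi)$, $T_1(\mu,N,\Phi)=\max(|T_1^{low}(\mu,N,\Phi)|,|T_1^{up}(\mu,N,\Phi)|)$, and $T_2(N,\Phi)=\mathbf{E}_\mu\left(\left|\sum_{i>N}\langle w(\mu),\phi_i\rangle\langle r(\mu),\phi_i\rangle\right|\right)$ (assumed finite). Then for every $\alpha\in\,]0,1[$ and every $N\in\mathbb{N}^*$, $$P\left(|s(\mu)-\widetilde s(\mu)|>T_1(\mu,N,\Phi)+\frac{T_2(N,\Phi)}{\alpha}\right)\le\alpha.$$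
   Context: All maps of $\mu$ involved are assumed measurable so that the probability and expectation make sense; the probability and expectation are with respect to the distribution of the random parameter $\mu$. $M^t$ denotes the transpose of a matrix $M$ and $A(\mu)^{-t}$ the inverse of the transpose. *)

theory Defs
  imports "HOL-Analysis.Analysis" "HOL-Probability.Probability"
begin

definition kof :: "nat \<Rightarrow> (nat \<Rightarrow> 'p set) \<Rightarrow> 'p \<Rightarrow> nat" where
  "kof K Ps x = (THE k. k \<in> {1..K} \<and> x \<in> Ps k)"

text \<open>beta^min_{i,k} = min over P_k of D_i, beta^max_{i,k} = max over P_k of D_i
  (the min / max is assumed to exist in the theorem, so Inf / Sup are attained).\<close>
definition beta_min :: "(nat \<Rightarrow> 'p \<Rightarrow> real) \<Rightarrow> (nat \<Rightarrow> 'p set) \<Rightarrow> nat \<Rightarrow> nat \<Rightarrow> real" where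
  "beta_min D Ps i k = Inf (D i ` Ps k)"

definition beta_max :: "(nat \<Rightarrow> 'p \<Rightarrow> real) \<Rightarrow> (nat \<Rightarrow> 'p set) \<Rightarrow> nat \<Rightarrow> nat \<Rightarrow> real" where
  "beta_max D Ps i k = Sup (D i ` Ps k)"

text \<open>rc i x stands for <r(x), phi_i>.\<close>
definition beta_up :: "(nat \<Rightarrow> 'p \<Rightarrow> real) \<Rightarrow> (nat \<Rightarrow> 'p set) \<Rightarrow> nat \<Rightarrow> (nat \<Rightarrow> 'p \<Rightarrow> real)
    \<Rightarrow> nat \<Rightarrow> 'p \<Rightarrow> real" where
  "beta_up D Ps K rc i x =
     (if rc i x > 0 then beta_max D Ps i (kof K Ps x) else beta_min D Ps i (kof K Ps x))"

definition beta_low :: "(nat \<Rightarrow> 'p \<Rightarrow> real) \<Rightarrow> (nat \<Rightarrow> 'p set) \<Rightarrow> nat \<Rightarrow> (nat \<Rightarrow> 'p \<Rightarrow> real)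
    \<Rightarrow> nat \<Rightarrow> 'p \<Rightarrow> real" where
  "beta_low D Ps K rc i x =
     (if rc i x > 0 then beta_min D Ps i (kof K Ps x) else beta_max D Ps i (kof K Ps x))"

end

theory Submission
  imports Defs
begin

text \<open>
  The output error is the dual-weighted residual: with \<open>w = A\<^sup>-\<^sup>t l\<close> one has
  \<open>st - s = \<langle>w, r\<rangle>\<close>, and by Parseval \<open>\<langle>w, r\<rangle> = \<Sum>\<^sub>i \<langle>w, \<phi>\<^sub>i\<rangle>\<langle>r, \<phi>\<^sub>i\<rangle>\<close>.
  For \<open>i \<le> N\<close> the unknown factor \<open>\<langle>w(\<mu>), \<phi>\<^sub>i\<rangle>\<close> lies between \<open>\<beta>\<^sup>m\<^sup>i\<^sup>n\<close> and
  \<open>\<beta>\<^sup>m\<^sup>a\<^sup>x\<close> of the cell containing \<open>\<mu>\<close>, and choosing the bound according to the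
  sign of \<open>\<langle>r, \<phi>\<^sub>i\<rangle>\<close> brackets the head of the sum between \<open>T\<^sub>1\<^sup>l\<^sup>o\<^sup>w\<close> and
  \<open>T\<^sub>1\<^sup>u\<^sup>p\<close>. Hence \<open>|s - st| \<le> T\<^sub>1 + |tail|\<close> pointwise, and Markov's inequality
  applied to the tail gives the probabilistic bound.
\<close>

lemma inner_eq_sum_orthonormal:
  fixes phi :: "'i \<Rightarrow> 'a::euclidean_space"
  assumes "finite I" and "card I = DIM('a)"
    and orth: "\<forall>i\<in>I. \<forall>j\<in>I. phi i \<bullet> phi j = (if i = j then 1 else 0)"
  shows "x \<bullet> y = (\<Sum>i\<in>I. (x \<bullet> phi i) * (y \<bullet> phi i))"
proof -
  define B where "B = phi ` I"
  have inj: "inj_on phi I"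
    by (rule inj_onI) (use orth in \<open>metis one_neq_zero\<close>)
  have norm1: "\<And>b. b \<in> B \<Longrightarrow> norm b = 1"
    using orth unfolding B_def by (auto simp: norm_eq_sqrt_inner)
  have orthogonal: "pairwise orthogonal B"
    using orth unfolding B_def pairwise_def orthogonal_def by auto
  then have "independent B"
    using norm1 pairwise_orthogonal_independent by force
  moreover have "card B = DIM('a)"
    unfolding B_def using card_image[OF inj] assms(2) by simp
  ultimately have "UNIV \<subseteq> span B"
    by (intro card_ge_dim_independent) auto
  then have expand: "(\<Sum>b\<in>B. (x \<bullet> b) *\<^sub>R b) = x"
    using orthonormal_basis_expand[OF orthogonal norm1] \<open>finite I\<close> unfolding B_def by blast
  have "x \<bullet> y = (\<Sum>b\<in>B. (x \<bullet> b) * (b \<bullet> y))"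
    by (subst expand[symmetric]) (simp add: inner_sum_left)
  also have "\<dots> = (\<Sum>i\<in>I. (x \<bullet> phi i) * (y \<bullet> phi i))"
    unfolding B_def by (simp add: sum.reindex[OF inj] inner_commute)
  finally show ?thesis .
qed

lemma adjoint_inner_residual:
  fixes A :: "real^'n^'n"
  assumes "invertible A" and "A *v u = f"
  shows "(matrix_inv (transpose A) *v l) \<bullet> (A *v y - f) = l \<bullet> y - l \<bullet> u"
proof -
  let ?W = "matrix_inv (transpose A)"
  have "invertible (transpose A)"
    using assms(1) transpose_invertible by blast
  then have right_inverse: "transpose A ** ?W = mat 1"
    unfolding invertible_def matrix_inv_def by (rule someI2_ex) auto
  have "(?W *v l) \<bullet> (A *v y - f) = (?W *v l) \<bullet> (A *v (y - u))"
    using assms(2) by (simp add: matrix_vector_mult_diff_distrib)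
  also have "\<dots> = (transpose A *v (?W *v l)) \<bullet> (y - u)"
    by (simp add: dot_lmul_matrix[symmetric])
  also have "\<dots> = l \<bullet> (y - u)"
    by (simp add: matrix_vector_mul_assoc right_inverse)
  finally show ?thesis
    by (simp add: inner_diff_right)
qed

lemma sum_split_at:
  fixes g :: "nat \<Rightarrow> 'a::comm_monoid_add"
  assumes "\<forall>i>n. g i = 0"
  shows "(\<Sum>i=1..n. g i) = (\<Sum>i=1..N. g i) + (\<Sum>i\<in>{N<..n}. g i)"
proof (cases "N \<le> n")
  case True
  then have "{1..n} = {1..N} \<union> {N<..n}" by auto
  then show ?thesis by (simp add: sum.union_disjoint ivl_disj_int)
next
  case False
  then have "(\<Sum>i=1..N. g i) = (\<Sum>i=1..n. g i)"
    using assms by (intro sum.mono_neutral_right) auto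
  then show ?thesis using False by simp
qed

lemma kof_cell:
  assumes disjoint: "\<forall>k\<in>{1..K}. \<forall>k'\<in>{1..K}. k \<noteq> k' \<longrightarrow> Ps k \<inter> Ps k' = {}"
    and "x \<in> (\<Union>k\<in>{1..K}. Ps k)"
  shows "kof K Ps x \<in> {1..K}" and "x \<in> Ps (kof K Ps x)"
proof -
  obtain k where k: "k \<in> {1..K}" "x \<in> Ps k"
    using assms(2) by blast
  have "kof K Ps x = k"
    unfolding kof_def by (rule the_equality) (use k disjoint in blast)+
  then show "kof K Ps x \<in> {1..K}" and "x \<in> Ps (kof K Ps x)"
    using k by simp_all
qed

lemma beta_min_le:
  assumes "x \<in> Ps k" and "bdd_below (D i ` Ps k)"
  shows "beta_min D Ps i k \<le> D i x"
  unfolding beta_min_def using assms by (simp add: cInf_lower)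

lemma le_beta_max:
  assumes "x \<in> Ps k" and "bdd_above (D i ` Ps k)"
  shows "D i x \<le> beta_max D Ps i k"
  unfolding beta_max_def using assms by (simp add: cSup_upper)

lemma mult_beta_low_le:
  assumes "x \<in> Ps (kof K Ps x)"
    and "bdd_below (D i ` Ps (kof K Ps x))" and "bdd_above (D i ` Ps (kof K Ps x))"
  shows "rc i x * beta_low D Ps K rc i x \<le> rc i x * D i x"
  using mult_left_mono[OF beta_min_le[of x Ps "kof K Ps x" D i, OF assms(1,2)], of "rc i x"]
    mult_left_mono_neg[OF le_beta_max[of x Ps "kof K Ps x" D i, OF assms(1,3)], of "rc i x"]
  unfolding beta_low_def by auto

lemma mult_le_beta_up:
  assumes "x \<in> Ps (kof K Ps x)"
    and "bdd_below (D i ` Ps (kof K Ps x))" and "bdd_above (D i ` Ps (kof K Ps x))"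
  shows "rc i x * D i x \<le> rc i x * beta_up D Ps K rc i x"
  using mult_left_mono[OF le_beta_max[of x Ps "kof K Ps x" D i, OF assms(1,3)], of "rc i x"]
    mult_left_mono_neg[OF beta_min_le[of x Ps "kof K Ps x" D i, OF assms(1,2)], of "rc i x"]
  unfolding beta_up_def by auto

lemma abs_sum_le_max_beta_bounds:
  assumes "x \<in> Ps (kof K Ps x)"
    and "\<forall>i\<in>{1..N}. bdd_below (D i ` Ps (kof K Ps x)) \<and> bdd_above (D i ` Ps (kof K Ps x))"
  shows "\<bar>\<Sum>i=1..N. rc i x * D i x\<bar>
    \<le> max \<bar>\<Sum>i=1..N. rc i x * beta_low D Ps K rc i x\<bar> \<bar>\<Sum>i=1..N. rc i x * beta_up D Ps K rc i x\<bar>"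
proof -
  have "(\<Sum>i=1..N. rc i x * beta_low D Ps K rc i x) \<le> (\<Sum>i=1..N. rc i x * D i x)"
    using assms by (intro sum_mono mult_beta_low_le) auto
  moreover have "(\<Sum>i=1..N. rc i x * D i x) \<le> (\<Sum>i=1..N. rc i x * beta_up D Ps K rc i x)"
    using assms by (intro sum_mono mult_le_beta_up) auto
  ultimately show ?thesis by linarith
qed

lemma (in prob_space) measure_gt_integral_div_le:
  fixes X :: "'a \<Rightarrow> real"
  assumes X: "integrable M X" and nonneg: "\<forall>\<omega>\<in>space M. 0 \<le> X \<omega>" and "0 < \<alpha>"
  shows "measure M {\<omega>\<in>space M. X \<omega> > (\<integral>\<omega>. X \<omega> \<partial>M) / \<alpha>} \<le> \<alpha>"
proof -
  let ?E = "\<integral>\<omega>. X \<omega> \<partial>M"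
  have AE_nonneg: "AE \<omega> in M. 0 \<le> X \<omega>"
    using nonneg by simp
  have "0 \<le> ?E"
    using nonneg by (simp add: integral_nonneg)
  then consider "?E = 0" | "?E > 0" by linarith
  then show ?thesis
  proof cases
    case 1
    then have "AE \<omega> in M. X \<omega> = 0"
      using integral_nonneg_eq_0_iff_AE[OF X AE_nonneg] by simp
    then have "AE \<omega> in M. \<not> X \<omega> > ?E / \<alpha>"
      using 1 by auto
    then have "emeasure M {\<omega>\<in>space M. X \<omega> > ?E / \<alpha>} = 0"
      by (rule emeasure_eq_0_AE)
    then show ?thesis using \<open>0 < \<alpha>\<close> by (simp add: measure_def)
  next
    case 2
    have "measure M {\<omega>\<in>space M. X \<omega> > ?E / \<alpha>} \<le> measure M {\<omega>\<in>space M. X \<omega> \<ge> ?E / \<alpha>}"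
      using X by (intro finite_measure_mono) auto
    also have "\<dots> \<le> ?E / (?E / \<alpha>)"
      using 2 \<open>0 < \<alpha>\<close> by (intro integral_Markov_inequality_measure[OF X sets.top AE_nonneg]) simp
    also have "\<dots> = \<alpha>"
      using 2 by simp
    finally show ?thesis .
  qed
qed

lemma (in prob_space) measure_gt_bound_plus_integral_div_le:
  fixes X Y B :: "'a \<Rightarrow> real"
  assumes "integrable M X" and "\<forall>\<omega>\<in>space M. 0 \<le> X \<omega>" and "0 < \<alpha>"
    and bound: "\<forall>\<omega>\<in>space M. Y \<omega> \<le> B \<omega> + X \<omega>"
  shows "measure M {\<omega>\<in>space M. Y \<omega> > B \<omega> + (\<integral>\<omega>. X \<omega> \<partial>M) / \<alpha>} \<le> \<alpha>"
proof -
  let ?E = "\<integral>\<omega>. X \<omega> \<partial>M"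
  have "{\<omega>\<in>space M. Y \<omega> > B \<omega> + ?E / \<alpha>} \<subseteq> {\<omega>\<in>space M. X \<omega> > ?E / \<alpha>}"
    using bound by fastforce
  moreover have "{\<omega>\<in>space M. X \<omega> > ?E / \<alpha>} \<in> sets M"
    using assms(1) by measurable
  ultimately have "measure M {\<omega>\<in>space M. Y \<omega> > B \<omega> + ?E / \<alpha>}
      \<le> measure M {\<omega>\<in>space M. X \<omega> > ?E / \<alpha>}"
    by (rule finite_measure_mono)
  also have "\<dots> \<le> \<alpha>"
    using assms(1-3) by (rule measure_gt_integral_div_le)
  finally show ?thesis .
qed

theorem theorem1:
  fixes M :: "'a measure" and mu :: "'a \<Rightarrow> real^'p" and P :: "(real^'p) set"
    and A :: "real^'p \<Rightarrow> real^'n^'n" and f :: "real^'p \<Rightarrow> real^'n" and l :: "real^'n"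
    and Z :: "real^'m^'n" and u :: "real^'p \<Rightarrow> real^'n" and ut :: "real^'p \<Rightarrow> real^'m"
    and phi :: "nat \<Rightarrow> real^'n" and K :: nat and Ps :: "nat \<Rightarrow> (real^'p) set"
    and N :: nat and \<alpha> :: real
  assumes M: "prob_space M"
    and mu_meas: "mu \<in> borel_measurable M"
    and mu_P: "\<forall>\<omega>\<in>space M. mu \<omega> \<in> P"
    and A_inv: "\<forall>x\<in>P. invertible (A x)"
    and red_inv: "\<forall>x\<in>P. invertible (transpose Z ** A x ** Z)"
    and u_sol: "\<forall>x\<in>P. A x *v u x = f x"
    and ut_sol: "\<forall>x\<in>P. (transpose Z ** A x ** Z) *v ut x = transpose Z *v f x"
    and phi_orth: "\<forall>i\<in>{1..CARD('n)}. \<forall>j\<in>{1..CARD('n)}. phi i \<bullet> phi j = (if i = j then 1 else 0)"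
    and phi_zero: "\<forall>i. i \<notin> {1..CARD('n)} \<longrightarrow> phi i = 0"
    and Ps_ne: "\<forall>k\<in>{1..K}. Ps k \<noteq> {}"
    and Ps_disj: "\<forall>k\<in>{1..K}. \<forall>k'\<in>{1..K}. k \<noteq> k' \<longrightarrow> Ps k \<inter> Ps k' = {}"
    and Ps_cover: "(\<Union>k\<in>{1..K}. Ps k) = P"
  defines "w \<equiv> \<lambda>x. matrix_inv (transpose (A x)) *v l"
    and "r \<equiv> \<lambda>x. A x *v (Z *v ut x) - f x"
    and "s \<equiv> \<lambda>x. l \<bullet> u x"
    and "st \<equiv> \<lambda>x. l \<bullet> (Z *v ut x)"
  assumes beta_exist: "\<forall>i\<in>{1..N}. \<forall>k\<in>{1..K}.
       (\<exists>x\<in>Ps k. \<forall>y\<in>Ps k. w x \<bullet> phi i \<le> w y \<bullet> phi i) \<and> (\<exists>x\<in>Ps k. \<forall>y\<in>Ps k. w y \<bullet> phi i \<le> w x \<bullet> phi i)"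
    and T2_fin: "integrable M (\<lambda>\<omega>. \<bar>\<Sum>i\<in>{N<..CARD('n)}. (w (mu \<omega>) \<bullet> phi i) * (r (mu \<omega>) \<bullet> phi i)\<bar>)"
    and N_pos: "N \<ge> 1"
    and alpha: "0 < \<alpha>" "\<alpha> < 1"
  shows "measure M {\<omega>\<in>space M. \<bar>s (mu \<omega>) - st (mu \<omega>)\<bar> > max \<bar>\<Sum>i=1..N. (r (mu \<omega>) \<bullet> phi i) *
              beta_low (\<lambda>i x. w x \<bullet> phi i) Ps K (\<lambda>i x. r x \<bullet> phi i) i (mu \<omega>)\<bar>
            \<bar>\<Sum>i=1..N. (r (mu \<omega>) \<bullet> phi i) *
              beta_up (\<lambda>i x. w x \<bullet> phi i) Ps K (\<lambda>i x. r x \<bullet> phi i) i (mu \<omega>)\<bar>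
          + (\<integral>\<omega>'. \<bar>\<Sum>i\<in>{N<..CARD('n)}. (w (mu \<omega>') \<bullet> phi i) * (r (mu \<omega>') \<bullet> phi i)\<bar> \<partial>M) / \<alpha>} \<le> \<alpha>"
proof -
  interpret prob_space M by (rule M)
  let ?D = "\<lambda>i x. w x \<bullet> phi i" and ?rc = "\<lambda>i x. r x \<bullet> phi i"
  have bounded: "bdd_below (?D i ` Ps k) \<and> bdd_above (?D i ` Ps k)"
    if i: "i \<in> {1..N}" and k: "k \<in> {1..K}" for i k
  proof -
    obtain x1 x2 where "\<forall>y\<in>Ps k. ?D i x1 \<le> ?D i y" and "\<forall>y\<in>Ps k. ?D i y \<le> ?D i x2"
      using beta_exist i k by blast
    then show ?thesis by (meson bdd_belowI2 bdd_aboveI2)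
  qed
  have pointwise: "\<bar>s x - st x\<bar>
      \<le> max \<bar>\<Sum>i=1..N. ?rc i x * beta_low ?D Ps K ?rc i x\<bar> \<bar>\<Sum>i=1..N. ?rc i x * beta_up ?D Ps K ?rc i x\<bar>
        + \<bar>\<Sum>i\<in>{N<..CARD('n)}. ?D i x * ?rc i x\<bar>" if "x \<in> P" for x
  proof -
    have "st x - s x = w x \<bullet> r x"
      unfolding w_def r_def s_def st_def using adjoint_inner_residual A_inv u_sol \<open>x \<in> P\<close> by metis
    also have "\<dots> = (\<Sum>i=1..CARD('n). ?D i x * ?rc i x)"
      using phi_orth by (intro inner_eq_sum_orthonormal) auto
    also have "\<dots> = (\<Sum>i=1..N. ?rc i x * ?D i x) + (\<Sum>i\<in>{N<..CARD('n)}. ?D i x * ?rc i x)"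
      using phi_zero by (subst sum_split_at[where N = N]) (auto simp: mult.commute)
    finally have "\<bar>s x - st x\<bar> \<le> \<bar>\<Sum>i=1..N. ?rc i x * ?D i x\<bar> + \<bar>\<Sum>i\<in>{N<..CARD('n)}. ?D i x * ?rc i x\<bar>"
      by linarith
    moreover have "kof K Ps x \<in> {1..K}" and "x \<in> Ps (kof K Ps x)"
      using kof_cell[OF Ps_disj] Ps_cover \<open>x \<in> P\<close> by auto
    then have "\<bar>\<Sum>i=1..N. ?rc i x * ?D i x\<bar>
        \<le> max \<bar>\<Sum>i=1..N. ?rc i x * beta_low ?D Ps K ?rc i x\<bar> \<bar>\<Sum>i=1..N. ?rc i x * beta_up ?D Ps K ?rc i x\<bar>"
      using bounded by (intro abs_sum_le_max_beta_bounds) auto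
    ultimately show ?thesis by linarith
  qed
  show ?thesis
    using T2_fin alpha(1) pointwise mu_P by (intro measure_gt_bound_plus_integral_div_le) auto
qed

end
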